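(* Let $n,m$ be positive integers and $d=nm$. Let $\boldsymbol\alpha,\boldsymbol\beta\in\mathbb{R}^m_{\geq 0}$ be such that $\mathbf a=(\boldsymbol\alpha^\top,\dots,\boldsymbol\alpha^\top)^\top\in\mathbb{R}^d$ and $\mathbf b=(\boldsymbol\beta^\top,\dots,\boldsymbol\beta^\top)^\top\in\mathbb{R}^d$ ($n$ stacked copies each) are probability vectors. Let $\mathbf C_0,\dots,\mathbf C_{n-1}\in\mathbb{R}^{m\times m}_{\geq 0}$ and let $\mathbf C\in\mathbb{R}^{d\times d}$ be the block-circulant matrix whose $(r,s)$-th $m\times m$ block ($0\le r,s\le n-1$) is $\mathbf C_{(s-r)\bmod n}$. Let $\phi:\mathbb{R}\to\mathbb{R}\cup\{+\infty\}$ be convex with $\phi(x)=+\infty$ for $x<0$. Consider the problem $$\min_{\mathbf T\in\mathbb{R}^{d\times d}} \langle \mathbf C,\mathbf T\rangle+\sum_{i,j=0}^{d-1}\phi(T_{ij})\quad\text{s.t.}\quad \mathbf T\mathbf 1_d=\mathbf a,\ \ \mathbf T^\top\mathbf 1_d=\mathbf b,$$ and suppose it has an optimal solution. Then there exists an optimal solution $\mathbf T$ of this problem that is block-circulant, i.e. there are $\mathbf T_0,\dots,\mathbf T_{n-1}\in\mathbb{R}^{m\times m}_{\geq 0}$ such that the $(r,s)$-th $m\times m$ block of $\mathbf T$ is $\mathbf T_{(s-r)\bmod n}$ for all $0\le r,s\le n-1$.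
   Context: $\langle\mathbf X,\mathbf Y\rangle=\sum_{i,j}X_{ij}Y_{ij}$ is the Frobenius inner product, and $\mathbf 1_d$ is the all-ones vector in $\mathbb{R}^d$. Block-circulant means the first block row is $(\mathbf C_0,\mathbf C_1,\dots,\mathbf C_{n-1})$ and each subsequent block row is the cyclic shift of the previous one by one block to the right. *)

theory Defs
  imports "HOL-Analysis.Analysis" "HOL-Library.Extended_Real"
begin

text \<open>Matrices of size d x d are functions nat => nat => real, only entries
 with indices < d are relevant. Index i of R^d = R^(nm) is written i = r*m + p
 with block index r < n and inner index p < m.\<close>

definition ext_convex :: "(real \<Rightarrow> ereal) \<Rightarrow> bool" where
  "ext_convex \<phi> \<longleftrightarrow>
     (\<forall>x y t. 0 \<le> t \<and> t \<le> 1 \<longrightarrow>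
        \<phi> (t * x + (1 - t) * y) \<le> ereal t * \<phi> x + ereal (1 - t) * \<phi> y)"

definition stack :: "nat \<Rightarrow> (nat \<Rightarrow> real) \<Rightarrow> nat \<Rightarrow> real" where
  "stack m \<alpha> i = \<alpha> (i mod m)"

definition prob_vec :: "nat \<Rightarrow> (nat \<Rightarrow> real) \<Rightarrow> bool" where
  "prob_vec d v \<longleftrightarrow> (\<forall>i<d. 0 \<le> v i) \<and> (\<Sum>i<d. v i) = 1"

definition block_circulant ::
  "nat \<Rightarrow> nat \<Rightarrow> (nat \<Rightarrow> nat \<Rightarrow> real) \<Rightarrow> (nat \<Rightarrow> nat \<Rightarrow> nat \<Rightarrow> real) \<Rightarrow> bool" where
  "block_circulant n m M B \<longleftrightarrow>
     (\<forall>r<n. \<forall>s<n. \<forall>p<m. \<forall>q<m.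
        M (r * m + p) (s * m + q) = B (nat ((int s - int r) mod int n)) p q)"

definition frob :: "nat \<Rightarrow> (nat \<Rightarrow> nat \<Rightarrow> real) \<Rightarrow> (nat \<Rightarrow> nat \<Rightarrow> real) \<Rightarrow> real" where
  "frob d X Y = (\<Sum>i<d. \<Sum>j<d. X i j * Y i j)"

definition objective ::
  "nat \<Rightarrow> (nat \<Rightarrow> nat \<Rightarrow> real) \<Rightarrow> (real \<Rightarrow> ereal) \<Rightarrow> (nat \<Rightarrow> nat \<Rightarrow> real) \<Rightarrow> ereal" where
  "objective d C \<phi> T = ereal (frob d C T) + (\<Sum>i<d. \<Sum>j<d. \<phi> (T i j))"

definition feasible ::
  "nat \<Rightarrow> (nat \<Rightarrow> real) \<Rightarrow> (nat \<Rightarrow> real) \<Rightarrow> (nat \<Rightarrow> nat \<Rightarrow> real) \<Rightarrow> bool" where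
  "feasible d a b T \<longleftrightarrow> (\<forall>i<d. (\<Sum>j<d. T i j) = a i) \<and> (\<forall>j<d. (\<Sum>i<d. T i j) = b j)"

definition optimal ::
  "nat \<Rightarrow> (nat \<Rightarrow> nat \<Rightarrow> real) \<Rightarrow> (real \<Rightarrow> ereal) \<Rightarrow> (nat \<Rightarrow> real) \<Rightarrow> (nat \<Rightarrow> real)
     \<Rightarrow> (nat \<Rightarrow> nat \<Rightarrow> real) \<Rightarrow> bool" where
  "optimal d C \<phi> a b T \<longleftrightarrow> feasible d a b T \<and>
     (\<forall>T'. feasible d a b T' \<longrightarrow> objective d C \<phi> T \<le> objective d C \<phi> T')"

end

theory Submission
  imports Defs
begin

(* The cyclic block shifts i = r m + p \<mapsto> ((r + k) mod n) m + p, k < n, act on transport plans by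
   simultaneous permutation of rows and columns. They preserve the marginals a, b and the
   block-circulant cost C, so averaging an optimal plan over all n shifts yields a feasible plan with
   the same linear cost and, by Jensen's inequality for \<phi>, no larger penalty; hence it is again
   optimal. The average is shift-invariant, which is exactly the block-circulant structure, and it is nonnegative
   because its objective is finite while \<phi> = \<infinity> on negative numbers. If the optimal value is
   \<infinity>, every feasible plan is optimal, in particular the block-circulant product plan a b\<^sup>T. *)

lemma add_mod_add_complement:
  assumes "i < (N::nat)"
  shows "((i + c) mod N + (N - c mod N)) mod N = i"
proof -
  have "((i + c) mod N + (N - c mod N)) mod N = (i + c mod N + (N - c mod N)) mod N"
    by (metis mod_add_left_eq mod_add_right_eq)
  also have "\<dots> = (i + N) mod N"
    using assms by (simp add: less_imp_le_nat)
  finally show ?thesis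
    using assms by simp
qed

lemma bij_betw_add_mod: "bij_betw (\<lambda>i. (i + c) mod N) {..<N} {..<(N::nat)}"
proof -
  have inj: "inj_on (\<lambda>i. (i + c) mod N) {..<N}"
    by (rule inj_on_inverseI[where g = "\<lambda>i. (i + (N - c mod N)) mod N"])
      (use add_mod_add_complement in blast)
  have "(\<lambda>i. (i + c) mod N) ` {..<N} = {..<N}"
    by (rule endo_inj_surj) (use inj in auto)
  with inj show ?thesis
    unfolding bij_betw_def by blast
qed

lemma block_index_less:
  assumes "r < n" "p < m"
  shows "r * m + p < n * (m::nat)"
proof -
  have "r * m + p < Suc r * m"
    using assms(2) by simp
  also have "\<dots> \<le> n * m"
    using assms(1) by (intro mult_le_mono1) simp
  finally show ?thesis .
qed

lemma block_index_cases:
  assumes "i < n * (m::nat)"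
  obtains r p where "r < n" "p < m" "i = r * m + p"
proof
  have "0 < m"
    using assms by (cases m) auto
  then show "i div m < n" "i mod m < m"
    using assms by (simp_all add: less_mult_imp_div_less)
  show "i = i div m * m + i mod m"
    by simp
qed

lemma nat_int_diff_mod:
  assumes "r \<le> (n::nat)"
  shows "nat ((int s - int r) mod int n) = (s + (n - r)) mod n"
proof -
  have "int ((s + (n - r)) mod n) = int (s + (n - r)) mod int n"
    by (rule of_nat_mod)
  also have "int (s + (n - r)) = (int s - int r) + int n"
    using assms by simp
  also have "((int s - int r) + int n) mod int n = (int s - int r) mod int n"
    by (rule mod_add_self2)
  finally show ?thesis
    by simp
qed

definition block_shift :: "nat \<Rightarrow> nat \<Rightarrow> nat \<Rightarrow> nat \<Rightarrow> nat" where
  "block_shift n m k i = (i + k * m) mod (n * m)"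

lemma bij_betw_block_shift: "bij_betw (block_shift n m k) {..<n * m} {..<n * m}"
  unfolding block_shift_def[abs_def] by (rule bij_betw_add_mod)

lemma block_shift_block:
  assumes "p < m"
  shows "block_shift n m k (r * m + p) = ((r + k) mod n) * m + p"
proof -
  have "block_shift n m k (r * m + p) = ((r + k) * m + p) mod (m * n)"
    unfolding block_shift_def by (simp add: algebra_simps)
  also have "\<dots> = m * (((r + k) * m + p) div m mod n) + ((r + k) * m + p) mod m"
    by (rule mod_mult2_eq)
  also have "\<dots> = ((r + k) mod n) * m + p"
    using assms by simp
  finally show ?thesis .
qed

lemma block_shift_block_shift:
  "block_shift n m k (block_shift n m c i) = block_shift n m ((k + c) mod n) i"
proof -
  have "block_shift n m k (block_shift n m c i) = (i + (k + c) * m) mod (n * m)"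
    unfolding block_shift_def using mod_add_left_eq[of "i + c * m" "n * m" "k * m"]
    by (simp add: algebra_simps)
  also have "\<dots> = (i + ((k + c) * m) mod (n * m)) mod (n * m)"
    by (rule mod_add_right_eq[symmetric])
  also have "((k + c) * m) mod (n * m) = ((k + c) mod n) * m"
    by (rule mod_mult_mult2)
  finally show ?thesis
    unfolding block_shift_def .
qed

lemma stack_block_shift: "stack m \<alpha> (block_shift n m k i) = stack m \<alpha> i"
  unfolding block_shift_def stack_def by (simp add: mod_mod_cancel)

lemma block_circulant_block_shift_invariant:
  assumes "block_circulant n m M B" "i < n * m" "j < n * m"
  shows "M (block_shift n m k i) (block_shift n m k j) = M i j"
proof -
  have bc: "\<And>r s p q. r < n \<Longrightarrow> s < n \<Longrightarrow> p < m \<Longrightarrow> q < m \<Longrightarrow>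
      M (r * m + p) (s * m + q) = B (nat ((int s - int r) mod int n)) p q"
    using assms(1) unfolding block_circulant_def by blast
  obtain r p where r: "r < n" "p < m" "i = r * m + p"
    using assms(2) by (rule block_index_cases)
  obtain s q where s: "s < n" "q < m" "j = s * m + q"
    using assms(3) by (rule block_index_cases)
  have "(int ((s + k) mod n) - int ((r + k) mod n)) mod int n
      = ((int s + int k) mod int n - (int r + int k) mod int n) mod int n"
    by (simp only: of_nat_mod of_nat_add)
  also have "\<dots> = (int s - int r) mod int n"
    by (simp add: mod_diff_eq)
  finally have shifted_offset:
    "(int ((s + k) mod n) - int ((r + k) mod n)) mod int n = (int s - int r) mod int n" .
  have "M (block_shift n m k i) (block_shift n m k j)
      = M (((r + k) mod n) * m + p) (((s + k) mod n) * m + q)"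
    using r s by (simp add: block_shift_block)
  also have "\<dots> = B (nat ((int s - int r) mod int n)) p q"
    using bc[of "(r + k) mod n" "(s + k) mod n" p q] r s by (simp add: shifted_offset)
  also have "\<dots> = M i j"
    using bc r s by simp
  finally show ?thesis .
qed

lemma block_circulant_if_block_shift_invariant:
  assumes "\<And>k i j. i < n * m \<Longrightarrow> j < n * m \<Longrightarrow>
      M (block_shift n m k i) (block_shift n m k j) = M i j"
  shows "block_circulant n m M (\<lambda>k p q. M p (k * m + q))"
  unfolding block_circulant_def
proof (intro allI impI)
  fix r s p q
  assume rs: "r < n" "s < n" and pq: "p < m" "q < m"
  \<comment> \<open>shifting by n - r moves block row r to block row 0\<close>
  have "M (r * m + p) (s * m + q)
      = M (block_shift n m (n - r) (r * m + p)) (block_shift n m (n - r) (s * m + q))"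
    using assms block_index_less rs pq by simp
  also have "\<dots> = M p (((s + (n - r)) mod n) * m + q)"
    using rs pq by (simp add: block_shift_block)
  finally show "M (r * m + p) (s * m + q) = M p (nat ((int s - int r) mod int n) * m + q)"
    using rs by (simp add: nat_int_diff_mod)
qed

lemma convex_on_ext_convex:
  assumes cvx: "ext_convex \<phi>" and no_minf: "\<And>x. \<phi> x \<noteq> -\<infinity>"
  shows "convex_on {x. \<phi> x \<noteq> \<infinity>} (\<lambda>x. real_of_ereal (\<phi> x))"
proof -
  have chord: "\<phi> (u * x + v * y) \<le> ereal (u * real_of_ereal (\<phi> x) + v * real_of_ereal (\<phi> y))"
    if "\<phi> x \<noteq> \<infinity>" "\<phi> y \<noteq> \<infinity>" "0 \<le> u" "0 \<le> v" "u + v = 1" for x y u v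
  proof -
    have "\<phi> x = ereal (real_of_ereal (\<phi> x))" "\<phi> y = ereal (real_of_ereal (\<phi> y))"
      using ereal_real'[OF ereal_infinity_cases] that(1,2) no_minf by metis+
    moreover have "\<phi> (u * x + (1 - u) * y) \<le> ereal u * \<phi> x + ereal (1 - u) * \<phi> y"
      using cvx that(3-5) unfolding ext_convex_def by simp
    ultimately show ?thesis
      using that(5) by (metis add_diff_cancel_left' plus_ereal.simps(1) times_ereal.simps(1))
  qed
  have finite_val: "\<phi> x = ereal (real_of_ereal (\<phi> x))" if "\<phi> x \<le> ereal r" for x r
    using that no_minf[of x] by (cases "\<phi> x") auto
  show ?thesis
    unfolding convex_on_def convex_def
  proof (intro conjI ballI allI impI)
    fix x y u v :: real
    assume "x \<in> {x. \<phi> x \<noteq> \<infinity>}" "y \<in> {x. \<phi> x \<noteq> \<infinity>}" "0 \<le> u" "0 \<le> v" "u + v = 1"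
    then have le: "\<phi> (u * x + v * y) \<le> ereal (u * real_of_ereal (\<phi> x) + v * real_of_ereal (\<phi> y))"
      using chord by simp
    then show "u *\<^sub>R x + v *\<^sub>R y \<in> {x. \<phi> x \<noteq> \<infinity>}"
      by auto
    have "real_of_ereal (\<phi> (u * x + v * y)) \<le> u * real_of_ereal (\<phi> x) + v * real_of_ereal (\<phi> y)"
      using le finite_val[OF le] by (metis ereal_less_eq(3))
    then show "real_of_ereal (\<phi> (u *\<^sub>R x + v *\<^sub>R y))
        \<le> u * real_of_ereal (\<phi> x) + v * real_of_ereal (\<phi> y)"
      by simp
  qed
qed

lemma ext_convex_mean_le:
  assumes "ext_convex \<phi>" "\<And>x. \<phi> x \<noteq> -\<infinity>"
    and "finite K" "K \<noteq> {}" "\<And>k. k \<in> K \<Longrightarrow> \<phi> (x k) \<noteq> \<infinity>"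
  shows "\<phi> ((\<Sum>k\<in>K. x k) / real (card K))
    \<le> ereal ((\<Sum>k\<in>K. real_of_ereal (\<phi> (x k))) / real (card K))"
proof -
  let ?dom = "{x. \<phi> x \<noteq> \<infinity>}"
  have cvx: "convex_on ?dom (\<lambda>x. real_of_ereal (\<phi> x))"
    using assms(1,2) by (rule convex_on_ext_convex)
  have weights: "(\<Sum>k\<in>K. 1 / real (card K)) = 1"
    using assms(3,4) by simp
  have mean: "(\<Sum>k\<in>K. x k) / real (card K) = (\<Sum>k\<in>K. (1 / real (card K)) *\<^sub>R x k)"
    by (simp add: sum_divide_distrib)
  have "(\<Sum>k\<in>K. (1 / real (card K)) *\<^sub>R x k) \<in> ?dom"
    using assms(3,5) cvx weights unfolding convex_on_def by (intro convex_sum) auto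
  then have "\<phi> ((\<Sum>k\<in>K. x k) / real (card K)) = ereal (real_of_ereal (\<phi> ((\<Sum>k\<in>K. x k) / real (card K))))"
    using ereal_real'[OF ereal_infinity_cases] assms(2) mean by simp
  also have "real_of_ereal (\<phi> ((\<Sum>k\<in>K. x k) / real (card K)))
      \<le> (\<Sum>k\<in>K. 1 / real (card K) * real_of_ereal (\<phi> (x k)))"
    unfolding mean using assms(3,4,5) cvx weights by (intro convex_on_sum) auto
  also have "\<dots> = (\<Sum>k\<in>K. real_of_ereal (\<phi> (x k))) / real (card K)"
    by (simp add: sum_divide_distrib)
  finally show ?thesis
    by simp
qed

lemma phi_finite_if_objective_finite:
  assumes "objective d C \<phi> T \<noteq> \<infinity>" "i < d" "j < d"
  shows "\<phi> (T i j) \<noteq> \<infinity>"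
proof
  assume "\<phi> (T i j) = \<infinity>"
  then have "(\<Sum>i<d. \<Sum>j<d. \<phi> (T i j)) = \<infinity>"
    using assms(2,3) by (auto simp: sum_Pinfty)
  then show False
    using assms(1) unfolding objective_def by simp
qed

lemma nonneg_if_objective_finite:
  assumes "objective d C \<phi> T \<noteq> \<infinity>" "\<And>x. x < 0 \<Longrightarrow> \<phi> x = \<infinity>" "i < d" "j < d"
  shows "0 \<le> T i j"
  using phi_finite_if_objective_finite[OF assms(1,3,4)] assms(2) by (meson not_le)

definition perm_average ::
  "'k set \<Rightarrow> ('k \<Rightarrow> nat \<Rightarrow> nat) \<Rightarrow> (nat \<Rightarrow> nat \<Rightarrow> real) \<Rightarrow> nat \<Rightarrow> nat \<Rightarrow> real" where
  "perm_average K \<sigma> T i j = (\<Sum>k\<in>K. T (\<sigma> k i) (\<sigma> k j)) / real (card K)"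

context
  fixes K :: "'k set" and \<sigma> :: "'k \<Rightarrow> nat \<Rightarrow> nat" and d :: nat
  assumes K_finite: "finite K" and K_nonempty: "K \<noteq> {}"
    and perm: "\<And>k. k \<in> K \<Longrightarrow> bij_betw (\<sigma> k) {..<d} {..<d}"
begin

private lemma sum_reindex_perm: "k \<in> K \<Longrightarrow> (\<Sum>i<d. g (\<sigma> k i)) = (\<Sum>i<d. g i)"
  by (rule sum.reindex_bij_betw[OF perm])

private lemma perm_less: "k \<in> K \<Longrightarrow> i < d \<Longrightarrow> \<sigma> k i < d"
  using perm bij_betwE by blast

lemma perm_average_row_sum:
  assumes a_inv: "\<And>k i. k \<in> K \<Longrightarrow> i < d \<Longrightarrow> a (\<sigma> k i) = a i"
    and rows: "\<And>i. i < d \<Longrightarrow> (\<Sum>j<d. T i j) = a i"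
    and "i < d"
  shows "(\<Sum>j<d. perm_average K \<sigma> T i j) = a i"
proof -
  have "(\<Sum>j<d. perm_average K \<sigma> T i j) = (\<Sum>k\<in>K. \<Sum>j<d. T (\<sigma> k i) (\<sigma> k j)) / real (card K)"
    unfolding perm_average_def by (simp add: sum_divide_distrib[symmetric] sum.swap[of _ K])
  also have "\<dots> = (\<Sum>k\<in>K. \<Sum>j<d. T (\<sigma> k i) j) / real (card K)"
    by (simp add: sum_reindex_perm)
  also have "\<dots> = (\<Sum>k\<in>K. a i) / real (card K)"
    using assms by (simp add: perm_less)
  finally show ?thesis
    using K_finite K_nonempty by simp
qed

lemma feasible_perm_average:
  assumes "\<And>k i. k \<in> K \<Longrightarrow> i < d \<Longrightarrow> a (\<sigma> k i) = a i"
    and "\<And>k j. k \<in> K \<Longrightarrow> j < d \<Longrightarrow> b (\<sigma> k j) = b j"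
    and "feasible d a b T"
  shows "feasible d a b (perm_average K \<sigma> T)"
proof -
  have "perm_average K \<sigma> T i j = perm_average K \<sigma> (\<lambda>i j. T j i) j i" for i j
    unfolding perm_average_def ..
  then show ?thesis
    using assms perm_average_row_sum[of a T] perm_average_row_sum[of b "\<lambda>i j. T j i"]
    unfolding feasible_def by simp
qed

lemma sum_perm_average: "(\<Sum>i<d. \<Sum>j<d. perm_average K \<sigma> g i j) = (\<Sum>i<d. \<Sum>j<d. g i j)"
proof -
  have "(\<Sum>i<d. \<Sum>j<d. perm_average K \<sigma> g i j)
      = (\<Sum>k\<in>K. \<Sum>i<d. \<Sum>j<d. g (\<sigma> k i) (\<sigma> k j)) / real (card K)"
    unfolding perm_average_def
    by (simp add: sum_divide_distrib[symmetric] sum.swap[of _ K])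
  also have "\<dots> = (\<Sum>k\<in>K. \<Sum>i<d. \<Sum>j<d. g i j) / real (card K)"
  proof -
    have "(\<Sum>i<d. \<Sum>j<d. g (\<sigma> k i) (\<sigma> k j)) = (\<Sum>i<d. \<Sum>j<d. g i j)" if "k \<in> K" for k
    proof -
      have "(\<Sum>i<d. \<Sum>j<d. g (\<sigma> k i) (\<sigma> k j)) = (\<Sum>i<d. \<Sum>j<d. g (\<sigma> k i) j)"
        by (intro sum.cong refl sum_reindex_perm[OF that])
      also have "\<dots> = (\<Sum>i<d. \<Sum>j<d. g i j)"
        by (rule sum_reindex_perm[OF that, of "\<lambda>i. \<Sum>j<d. g i j"])
      finally show ?thesis .
    qed
    then show ?thesis
      by simp
  qed
  finally show ?thesis
    using K_finite K_nonempty by simp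
qed

lemma frob_perm_average:
  assumes C_inv: "\<And>k i j. k \<in> K \<Longrightarrow> i < d \<Longrightarrow> j < d \<Longrightarrow> C (\<sigma> k i) (\<sigma> k j) = C i j"
  shows "frob d C (perm_average K \<sigma> T) = frob d C T"
proof -
  have weighted: "C i j * perm_average K \<sigma> T i j = perm_average K \<sigma> (\<lambda>i j. C i j * T i j) i j"
    if "i < d" "j < d" for i j
  proof -
    have "(\<Sum>k\<in>K. C (\<sigma> k i) (\<sigma> k j) * T (\<sigma> k i) (\<sigma> k j))
        = (\<Sum>k\<in>K. C i j * T (\<sigma> k i) (\<sigma> k j))"
      using C_inv that by (intro sum.cong) (auto simp: perm_less)
    then show ?thesis
      unfolding perm_average_def by (simp add: sum_distrib_left)
  qed
  have "frob d C (perm_average K \<sigma> T) = (\<Sum>i<d. \<Sum>j<d. perm_average K \<sigma> (\<lambda>i j. C i j * T i j) i j)"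
    unfolding frob_def by (intro sum.cong refl) (simp add: weighted)
  also have "\<dots> = frob d C T"
    unfolding frob_def by (rule sum_perm_average)
  finally show ?thesis .
qed

lemma objective_perm_average_le:
  assumes C_inv: "\<And>k i j. k \<in> K \<Longrightarrow> i < d \<Longrightarrow> j < d \<Longrightarrow> C (\<sigma> k i) (\<sigma> k j) = C i j"
    and cvx: "ext_convex \<phi>" and no_minf: "\<And>x. \<phi> x \<noteq> -\<infinity>"
    and fin: "objective d C \<phi> T \<noteq> \<infinity>"
  shows "objective d C \<phi> (perm_average K \<sigma> T) \<le> objective d C \<phi> T"
proof -
  define \<psi> where "\<psi> i j = real_of_ereal (\<phi> (T i j))" for i j
  have \<phi>_T: "\<phi> (T i j) = ereal (\<psi> i j)" if "i < d" "j < d" for i j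
    unfolding \<psi>_def
    using ereal_real'[OF ereal_infinity_cases] phi_finite_if_objective_finite[OF fin that] no_minf
    by metis
  have shifted_finite: "\<phi> (T (\<sigma> k i) (\<sigma> k j)) \<noteq> \<infinity>" if "k \<in> K" "i < d" "j < d" for k i j
    using phi_finite_if_objective_finite[OF fin] perm_less that by blast
  have jensen: "\<phi> (perm_average K \<sigma> T i j) \<le> ereal (perm_average K \<sigma> \<psi> i j)"
    if "i < d" "j < d" for i j
    unfolding perm_average_def \<psi>_def
    using cvx no_minf K_finite K_nonempty that
    by (intro ext_convex_mean_le) (auto simp: shifted_finite)
  have "objective d C \<phi> (perm_average K \<sigma> T)
      \<le> ereal (frob d C (perm_average K \<sigma> T)) + (\<Sum>i<d. \<Sum>j<d. ereal (perm_average K \<sigma> \<psi> i j))"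
    unfolding objective_def using jensen by (intro add_left_mono sum_mono) auto
  also have "\<dots> = ereal (frob d C T) + ereal (\<Sum>i<d. \<Sum>j<d. \<psi> i j)"
    using frob_perm_average[of C T, OF C_inv] sum_perm_average by simp
  also have "\<dots> = objective d C \<phi> T"
    unfolding objective_def using \<phi>_T by simp
  finally show ?thesis .
qed

lemma optimal_perm_average:
  assumes "\<And>k i j. k \<in> K \<Longrightarrow> i < d \<Longrightarrow> j < d \<Longrightarrow> C (\<sigma> k i) (\<sigma> k j) = C i j"
    and "\<And>k i. k \<in> K \<Longrightarrow> i < d \<Longrightarrow> a (\<sigma> k i) = a i"
    and "\<And>k j. k \<in> K \<Longrightarrow> j < d \<Longrightarrow> b (\<sigma> k j) = b j"
    and "ext_convex \<phi>" "\<And>x. \<phi> x \<noteq> -\<infinity>"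
    and "optimal d C \<phi> a b T" "objective d C \<phi> T \<noteq> \<infinity>"
  shows "optimal d C \<phi> a b (perm_average K \<sigma> T)"
  using assms feasible_perm_average[of a b T] objective_perm_average_le[of C \<phi> T]
  unfolding optimal_def by (meson order_trans)

end

lemma perm_average_block_shift_invariant:
  "perm_average {..<n} (block_shift n m) T (block_shift n m c i) (block_shift n m c j)
    = perm_average {..<n} (block_shift n m) T i j"
  unfolding perm_average_def block_shift_block_shift
  using sum.reindex_bij_betw[OF bij_betw_add_mod, of "\<lambda>k. T (block_shift n m k i) (block_shift n m k j)" c n]
  by simp

lemma optimal_block_shift_average:
  assumes "0 < n" "block_circulant n m C Cb" "ext_convex \<phi>" "\<And>x. \<phi> x \<noteq> -\<infinity>"
    and "optimal (n * m) C \<phi> (stack m \<alpha>) (stack m \<beta>) T" "objective (n * m) C \<phi> T \<noteq> \<infinity>"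
  shows "optimal (n * m) C \<phi> (stack m \<alpha>) (stack m \<beta>) (perm_average {..<n} (block_shift n m) T)"
  by (rule optimal_perm_average[where K = "{..<n}" and \<sigma> = "block_shift n m" and d = "n * m"])
    (use assms in \<open>simp_all add: lessThan_empty_iff bij_betw_block_shift stack_block_shift
      block_circulant_block_shift_invariant\<close>)

lemma block_circulant_block_shift_average:
  "block_circulant n m (perm_average {..<n} (block_shift n m) T)
    (\<lambda>k p q. perm_average {..<n} (block_shift n m) T p (k * m + q))"
  by (rule block_circulant_if_block_shift_invariant) (rule perm_average_block_shift_invariant)

lemma block_circulant_nonneg:
  assumes "block_circulant n m M B" "\<And>i j. i < n * m \<Longrightarrow> j < n * m \<Longrightarrow> 0 \<le> M i j"
    and "k < n" "p < m" "q < m"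
  shows "0 \<le> B k p q"
proof -
  have "M (0 * m + p) (k * m + q) = B (nat ((int k - int 0) mod int n)) p q"
    using assms(1,3-5) unfolding block_circulant_def by (metis gr_zeroI not_less_zero)
  then have "M p (k * m + q) = B k p q"
    using assms(3) by simp
  then show ?thesis
    using assms(2) block_index_less[OF assms(3,5)] block_index_less[OF _ assms(4), of 0 n] assms(3)
    by fastforce
qed

lemma optimal_if_optimal_value_infinite:
  assumes "optimal d C \<phi> a b T" "objective d C \<phi> T = \<infinity>" "feasible d a b T'"
  shows "optimal d C \<phi> a b T'"
  using assms unfolding optimal_def by (metis ereal_less_eq(1) order_trans)

lemma feasible_product:
  assumes "prob_vec d a" "prob_vec d b"
  shows "feasible d a b (\<lambda>i j. a i * b j)"
  using assms unfolding prob_vec_def feasible_def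
  by (simp add: sum_distrib_left[symmetric] sum_distrib_right[symmetric])

lemma block_circulant_stack_product:
  "block_circulant n m (\<lambda>i j. stack m \<alpha> i * stack m \<beta> j) (\<lambda>k p q. \<alpha> p * \<beta> q)"
  unfolding block_circulant_def stack_def by simp

theorem lemma1:
  fixes n m :: nat and \<alpha> \<beta> :: "nat \<Rightarrow> real"
    and Cb :: "nat \<Rightarrow> nat \<Rightarrow> nat \<Rightarrow> real"
    and C :: "nat \<Rightarrow> nat \<Rightarrow> real"
    and \<phi> :: "real \<Rightarrow> ereal"
  assumes "0 < n" and "0 < m"
    and "\<forall>p<m. 0 \<le> \<alpha> p" and "\<forall>p<m. 0 \<le> \<beta> p"
    and "prob_vec (n * m) (stack m \<alpha>)" and "prob_vec (n * m) (stack m \<beta>)"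
    and "\<forall>k<n. \<forall>p<m. \<forall>q<m. 0 \<le> Cb k p q"
    and "block_circulant n m C Cb"
    and "ext_convex \<phi>" and "\<forall>x. \<phi> x \<noteq> -\<infinity>" and "\<forall>x<0. \<phi> x = \<infinity>"
    and "\<exists>T. optimal (n * m) C \<phi> (stack m \<alpha>) (stack m \<beta>) T"
  shows "\<exists>T Tb. optimal (n * m) C \<phi> (stack m \<alpha>) (stack m \<beta>) T
           \<and> (\<forall>k<n. \<forall>p<m. \<forall>q<m. 0 \<le> Tb k p q)
           \<and> block_circulant n m T Tb"
proof -
  obtain T where opt: "optimal (n * m) C \<phi> (stack m \<alpha>) (stack m \<beta>) T"
    using assms(12) by blast
  show ?thesis
  proof (cases "objective (n * m) C \<phi> T = \<infinity>")
    case True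
    have "optimal (n * m) C \<phi> (stack m \<alpha>) (stack m \<beta>) (\<lambda>i j. stack m \<alpha> i * stack m \<beta> j)"
      using opt True feasible_product[OF assms(5,6)] by (rule optimal_if_optimal_value_infinite)
    moreover have "\<forall>k<n. \<forall>p<m. \<forall>q<m. 0 \<le> \<alpha> p * \<beta> q"
      using assms(3,4) by simp
    ultimately show ?thesis
      using block_circulant_stack_product[of n m \<alpha> \<beta>]
      by (intro exI[of _ "\<lambda>i j. stack m \<alpha> i * stack m \<beta> j"] exI[of _ "\<lambda>k p q. \<alpha> p * \<beta> q"] conjI)
  next
    case False
    define T' where "T' = perm_average {..<n} (block_shift n m) T"
    have opt': "optimal (n * m) C \<phi> (stack m \<alpha>) (stack m \<beta>) T'"
      unfolding T'_def using assms(1,8-10) opt False by (intro optimal_block_shift_average) auto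
    then have "objective (n * m) C \<phi> T' \<le> objective (n * m) C \<phi> T"
      using opt unfolding optimal_def by blast
    then have "objective (n * m) C \<phi> T' \<noteq> \<infinity>"
      using False by (metis ereal_infty_less_eq(1))
    then have "0 \<le> T' i j" if "i < n * m" "j < n * m" for i j
      using nonneg_if_objective_finite assms(11) that by blast
    moreover have bc: "block_circulant n m T' (\<lambda>k p q. T' p (k * m + q))"
      unfolding T'_def by (rule block_circulant_block_shift_average)
    ultimately have "\<forall>k<n. \<forall>p<m. \<forall>q<m. 0 \<le> T' p (k * m + q)"
      using block_circulant_nonneg by blast
    with opt' bc show ?thesis
      by (intro exI[of _ T'] exI[of _ "\<lambda>k p q. T' p (k * m + q)"] conjI) auto
  qed
qed

end
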